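(* Let $\mu$ be an infinite cardinal and $T$ an $E^{\mu^+}_{\mathrm{cf}(\mu)}$-coherent streamlined $\mu^+$-tree. Suppose $d:\{b_\delta\mid\delta\in\Delta\}\to\mu^+$ is a function where: $\Delta=D\cap E^{\mu^+}_{\mathrm{cf}(\mu)}$ for some club $D\subseteq\mu^+$; for every $\delta\in\Delta$, $b_\delta\in T_\delta$ and $d(b_\delta)<\delta$; and $d$ is injective on chains (i.e., whenever $\gamma,\delta\in\Delta$ and $b_\gamma\subsetneq b_\delta$, $d(b_\gamma)\ne d(b_\delta)$). Then $T$ is special.
   Context: $E^{\mu^+}_{\mathrm{cf}(\mu)}=\{\alpha<\mu^+\mid\mathrm{cf}(\alpha)=\mathrm{cf}(\mu)\}$. A streamlined $\mu^+$-tree is a set $T$ of functions with domain an ordinal below $\mu^+$ (values in $H_{\mu^+}$), closed under restrictions, such that $(T,\subseteq)$ has height $\mu^+$ and all levels $T_\alpha=\{t\in T\mid\mathrm{dom}(t)=\alpha\}$ have size $\le\mu$. For $S\subseteq\mu^+$, $T$ is $S$-coherent iff for every $\delta\in S$ and all $s,t\in T_\delta$, $\sup\{\gamma<\delta\mid s(\gamma)\ne t(\gamma)\}<\delta$. A $\mu^+$-tree $(T,<_T)$ is special iff there is $f:T\to T$ with $f(x)<_Tx$ for every non-minimal $x$ and each $f^{-1}\{z\}$ covered by at most $\mu$ antichains. *)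

theory Defs
  imports Main
begin

text \<open>Ordinals below mu^+ are the elements of a well-ordered type 'k whose proper initial
segments all have cardinality at most \<mu> but which itself has cardinality greater than \<mu>;
the cardinal \<mu> is an element m of 'k (an infinite initial ordinal).\<close>

definition card_le :: "'a set \<Rightarrow> 'b set \<Rightarrow> bool" where
  "card_le A B \<longleftrightarrow> (card_of A, card_of B) \<in> ordLeq"

definition card_eq :: "'a set \<Rightarrow> 'b set \<Rightarrow> bool" where
  "card_eq A B \<longleftrightarrow> (card_of A, card_of B) \<in> ordIso"

definition is_successor_of :: "'k::wellorder itself \<Rightarrow> 'k \<Rightarrow> bool" where
  "is_successor_of _ m \<longleftrightarrow>
     infinite {..<m} \<and>
     (\<forall>\<beta><m. \<not> card_eq {..<\<beta>} {..<m}) \<and>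
     (\<forall>\<alpha>::'k. card_le {..<\<alpha>} {..<m}) \<and>
     \<not> card_le (UNIV :: 'k set) {..<m}"

definition cofinal_in :: "'k::wellorder set \<Rightarrow> 'k \<Rightarrow> bool" where
  "cofinal_in A \<alpha> \<longleftrightarrow> A \<subseteq> {..<\<alpha>} \<and> (\<forall>\<beta><\<alpha>. \<exists>a\<in>A. \<beta> \<le> a)"

definition cf_witness :: "'k::wellorder \<Rightarrow> 'k set \<Rightarrow> bool" where
  "cf_witness \<alpha> A \<longleftrightarrow> cofinal_in A \<alpha> \<and> (\<forall>B. cofinal_in B \<alpha> \<longrightarrow> card_le A B)"

definition same_cf :: "'k::wellorder \<Rightarrow> 'k \<Rightarrow> bool" where
  "same_cf \<alpha> \<beta> \<longleftrightarrow> (\<exists>A B. cf_witness \<alpha> A \<and> cf_witness \<beta> B \<and> card_eq A B)"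

definition E_cf :: "'k::wellorder \<Rightarrow> 'k set" where
  "E_cf m = {\<alpha>. same_cf \<alpha> m}"

definition club :: "'k::wellorder set \<Rightarrow> bool" where
  "club D \<longleftrightarrow> (\<forall>\<alpha>. \<exists>\<delta>\<in>D. \<alpha> \<le> \<delta>) \<and>
     (\<forall>\<alpha>. (\<exists>\<beta>. \<beta> < \<alpha>) \<and> (\<forall>\<beta><\<alpha>. \<exists>\<delta>\<in>D. \<beta> < \<delta> \<and> \<delta> < \<alpha>) \<longrightarrow> \<alpha> \<in> D)"

definition level :: "('k::wellorder \<rightharpoonup> 'v) set \<Rightarrow> 'k \<Rightarrow> ('k \<rightharpoonup> 'v) set" where
  "level T \<alpha> = {t\<in>T. dom t = {..<\<alpha>}}"

definition streamlined_tree :: "'k::wellorder \<Rightarrow> ('k \<rightharpoonup> 'v) set \<Rightarrow> bool" where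
  "streamlined_tree m T \<longleftrightarrow>
     (\<forall>t\<in>T. \<exists>\<alpha>. dom t = {..<\<alpha>}) \<and>
     (\<forall>t\<in>T. \<forall>\<alpha>. t |` {..<\<alpha>} \<in> T) \<and>
     (\<forall>\<alpha>. level T \<alpha> \<noteq> {}) \<and>
     (\<forall>\<alpha>. card_le (level T \<alpha>) {..<m})"

definition coherent :: "'k::wellorder set \<Rightarrow> ('k \<rightharpoonup> 'v) set \<Rightarrow> bool" where
  "coherent S T \<longleftrightarrow> (\<forall>\<delta>\<in>S. \<forall>s\<in>level T \<delta>. \<forall>t\<in>level T \<delta>.
      \<exists>\<beta><\<delta>. \<forall>\<gamma><\<delta>. s \<gamma> \<noteq> t \<gamma> \<longrightarrow> \<gamma> \<le> \<beta>)"

definition strict_map_le :: "('a \<rightharpoonup> 'b) \<Rightarrow> ('a \<rightharpoonup> 'b) \<Rightarrow> bool" where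
  "strict_map_le s t \<longleftrightarrow> s \<subseteq>\<^sub>m t \<and> s \<noteq> t"

definition antichain_in :: "('a \<rightharpoonup> 'b) set \<Rightarrow> ('a \<rightharpoonup> 'b) set \<Rightarrow> bool" where
  "antichain_in T A \<longleftrightarrow> A \<subseteq> T \<and> (\<forall>x\<in>A. \<forall>y\<in>A. \<not> strict_map_le x y)"

definition special :: "'k::wellorder \<Rightarrow> ('k \<rightharpoonup> 'v) set \<Rightarrow> bool" where
  "special m T \<longleftrightarrow> (\<exists>f. (\<forall>x\<in>T. f x \<in> T) \<and>
     (\<forall>x\<in>T. (\<exists>y\<in>T. strict_map_le y x) \<longrightarrow> strict_map_le (f x) x) \<and>
     (\<forall>z\<in>T. \<exists>\<A>. card_le \<A> {..<m} \<and> (\<forall>A\<in>\<A>. antichain_in T A) \<and>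
        {x\<in>T. f x = z} \<subseteq> \<Union>\<A>))"

end

theory Submission
  imports Defs
begin

text \<open>A colouring \<open>c : T \<rightarrow> \<mu>\<close> that is injective on chains makes \<open>T\<close> special: its \<open>\<mu>\<close> fibres
are antichains. Such a colouring is defined by recursion on the height, the colour of \<open>x\<close> being an
injective code of data that separates \<open>x\<close> from its initial segments, which by induction already
carry pairwise distinct colours. A height outside \<open>D\<close> is located in its gap of \<open>D\<close>. At a height
in \<open>D\<close> where some colour class bounded below \<open>\<mu>\<close> is cofinal, the order type of that class
separates \<open>x\<close> from its initial segments. At the remaining heights in \<open>D\<close> the colouring along
\<open>x\<close> witnesses cofinality \<open>cf(\<mu>)\<close>, so by coherence \<open>x\<close> eventually agrees with the selected branch
\<open>b\<^sub>\<delta>\<close>; recording the agreement point, \<open>d(b\<^sub>\<delta>)\<close> and \<open>b\<^sub>\<delta>\<close> below that point, a collision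
between \<open>x \<subset> y\<close> would give \<open>b\<^sub>\<gamma> \<subset> b\<^sub>\<delta>\<close> with \<open>d(b\<^sub>\<gamma>) = d(b\<^sub>\<delta>)\<close>.\<close>

unbundle cardinal_syntax

lemma Well_order_le: "Well_order {(x, y::'k::wellorder). x \<le> y}"
  unfolding well_order_on_def linear_order_on_def partial_order_on_def preorder_on_def
    refl_on_def trans_def antisym_def total_on_def
  by (auto simp: Field_def) (rule wf_subset[OF wf], auto)

lemma inj_on_into_nonempty:
  assumes "|A| \<le>o |B|" and "B \<noteq> {}"
  shows "\<exists>f. inj_on f A \<and> range f \<subseteq> B"
proof -
  obtain f where f: "inj_on f A" "f ` A \<subseteq> B"
    using assms(1) unfolding card_of_ordLeq[symmetric] by blast
  obtain b0 where "b0 \<in> B" using assms(2) by blast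
  let ?g = "\<lambda>a. if a \<in> A then f a else b0"
  have "inj_on ?g A" using f(1) by (simp add: inj_on_def)
  moreover have "range ?g \<subseteq> B" using f(2) \<open>b0 \<in> B\<close> by auto
  ultimately show ?thesis by blast
qed

lemma cf_witness_exists: "\<exists>A. cf_witness \<alpha> A"
proof -
  let ?R = "{|A| | A. cofinal_in A \<alpha>}"
  have "cofinal_in {..<\<alpha>} \<alpha>" unfolding cofinal_in_def by auto
  then have "?R \<noteq> {}" by auto
  moreover have "\<forall>r\<in>?R. Well_order r" using card_of_Well_order by auto
  ultimately obtain r where "r \<in> ?R" "\<forall>r'\<in>?R. r \<le>o r'"
    using exists_minim_Well_order by meson
  then obtain A where "cofinal_in A \<alpha>" "\<forall>B. cofinal_in B \<alpha> \<longrightarrow> |A| \<le>o |B|" by blast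
  then show ?thesis unfolding cf_witness_def card_le_def by blast
qed

subsection \<open>Successor cardinals\<close>

definition is_limit :: "'k::wellorder \<Rightarrow> bool" where
  "is_limit \<alpha> \<longleftrightarrow> (\<forall>\<beta><\<alpha>. \<exists>\<gamma>. \<beta> < \<gamma> \<and> \<gamma> < \<alpha>)"

context
  fixes m :: "'k::wellorder"
  assumes successor: "is_successor_of TYPE('k) m"
begin

lemma infinite_lessThan_successor: "infinite {..<m}"
  using successor unfolding is_successor_of_def by blast

lemma card_lessThan_le_successor: "|{..<(\<alpha>::'k)}| \<le>o |{..<m}|"
  using successor unfolding is_successor_of_def card_le_def by blast

lemma card_lessThan_less_successor:
  assumes "\<beta> < m" shows "|{..<\<beta>}| <o |{..<m}|"
  using successor assms card_lessThan_le_successor[of \<beta>] ordLeq_iff_ordLess_or_ordIso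
  unfolding is_successor_of_def card_eq_def by blast

lemma successor_nonempty: "\<exists>\<alpha>. \<alpha> < m"
proof -
  have "{..<m} \<noteq> {}" using infinite_lessThan_successor by auto
  then show ?thesis by auto
qed

lemma successor_limit: "is_limit m"
  unfolding is_limit_def
proof (intro allI impI, rule ccontr)
  fix \<beta> assume "\<beta> < m" and "\<not> (\<exists>\<gamma>. \<beta> < \<gamma> \<and> \<gamma> < m)"
  then have eq: "{..<m} = {..<\<beta>} \<union> {\<beta>}"
    by (auto simp: not_less) (metis le_less not_le)
  have "|{..<\<beta>} \<union> {\<beta>}| <o |{..<m}|"
  proof (rule card_of_Un_ordLess_infinite[OF infinite_lessThan_successor])
    show "|{..<\<beta>}| <o |{..<m}|" using card_lessThan_less_successor[OF \<open>\<beta> < m\<close>] .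
    show "|{\<beta>}| <o |{..<m}|"
      using finite_ordLess_infinite[OF card_of_Well_order card_of_Well_order, of "{\<beta>}" "{..<m}"]
        infinite_lessThan_successor
      by (simp add: Field_card_of)
  qed
  then show False unfolding eq[symmetric] by (simp add: ordLess_irreflexive)
qed

lemma card_code_domain:
  "|(UNIV :: nat set) \<times> {..<m} \<times> {..<m} \<times> {..<m}| \<le>o |{..<m}|"
proof -
  let ?M = "{..<m}"
  have sq: "|?M \<times> ?M| \<le>o |?M|"
    using card_of_Times_same_infinite[OF infinite_lessThan_successor] ordIso_iff_ordLeq by blast
  have cube: "|?M \<times> ?M \<times> ?M| \<le>o |?M|"
    using ordLeq_transitive[OF card_of_Times_mono2[OF sq] sq] .
  have "|(UNIV :: nat set)| \<le>o |?M|"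
    using infinite_iff_card_of_nat infinite_lessThan_successor by blast
  then have "|(UNIV :: nat set) \<times> ?M \<times> ?M \<times> ?M| \<le>o |?M \<times> (?M \<times> ?M \<times> ?M)|"
    by (rule card_of_Times_mono1)
  also have "|?M \<times> (?M \<times> ?M \<times> ?M)| \<le>o |?M \<times> ?M|"
    using card_of_Times_mono2[OF cube] .
  finally show ?thesis using sq by (rule ordLeq_transitive)
qed

end

subsection \<open>Order types\<close>

definition le_on :: "'k::wellorder set \<Rightarrow> 'k rel" where
  "le_on Z = {(x, y). x \<in> Z \<and> y \<in> Z \<and> x \<le> y}"

definition ord_type :: "'k::wellorder set \<Rightarrow> 'k" where
  "ord_type Z = (LEAST \<zeta>. le_on Z =o le_on {..<\<zeta>})"

lemma Well_order_le_on: "Well_order (le_on Z)"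
proof -
  have "le_on Z = Restr {(x, y). x \<le> y} Z" by (auto simp: le_on_def)
  then show ?thesis using Well_order_Restr[OF Well_order_le] by simp
qed

lemma Field_le_on: "Field (le_on Z) = Z"
  by (auto simp: Field_def le_on_def)

lemma ord_type:
  fixes m :: "'k::wellorder" and Z :: "'k set"
  assumes "|Z| <o |{..<m}|"
  shows "ord_type Z < m \<and> le_on Z =o le_on {..<ord_type Z}"
proof -
  have "le_on Z <o le_on {..<m}"
  proof (rule ccontr)
    assume "\<not> le_on Z <o le_on {..<m}"
    then have "le_on {..<m} \<le>o le_on Z"
      using not_ordLess_iff_ordLeq[OF Well_order_le_on Well_order_le_on] by blast
    then have "|{..<m}| \<le>o |Z|" using card_of_mono2 by (metis Field_le_on)
    then show False using assms not_ordLess_ordLeq by blast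
  qed
  then obtain \<zeta> where "\<zeta> \<in> Field (le_on {..<m})"
    and iso: "le_on Z =o Restr (le_on {..<m}) (underS (le_on {..<m}) \<zeta>)"
    using ordLess_iff_ordIso_Restr[OF Well_order_le_on Well_order_le_on] by blast
  then have "\<zeta> < m" by (simp add: Field_le_on)
  then have "Restr (le_on {..<m}) (underS (le_on {..<m}) \<zeta>) = le_on {..<\<zeta>}"
    by (auto simp: le_on_def underS_def)
  with iso \<open>\<zeta> < m\<close> have \<zeta>: "\<zeta> < m" "le_on Z =o le_on {..<\<zeta>}" by simp_all
  have "le_on Z =o le_on {..<ord_type Z}"
    unfolding ord_type_def using \<zeta>(2) by (rule LeastI)
  moreover have "ord_type Z \<le> \<zeta>" unfolding ord_type_def using \<zeta>(2) by (rule Least_le)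
  ultimately show ?thesis using \<zeta>(1) by simp
qed

lemma ord_type_initial_segment:
  fixes m :: "'k::wellorder" and Z :: "'k set"
  assumes "|Z| <o |{..<m}|" and "z \<in> Z"
  shows "ord_type {y \<in> Z. y < z} \<noteq> ord_type Z"
proof
  let ?Y = "{y \<in> Z. y < z}"
  have "|?Y| <o |{..<m}|" using assms(1) card_of_mono1[of ?Y Z] ordLeq_ordLess_trans by blast
  then have Y: "le_on ?Y =o le_on {..<ord_type ?Y}" by (rule ord_type[THEN conjunct2])
  have "Restr (le_on Z) (underS (le_on Z) z) = le_on ?Y"
    using assms(2) by (auto simp: le_on_def underS_def)
  then have "le_on ?Y =o Restr (le_on Z) (underS (le_on Z) z)"
    using ordIso_reflexive[OF Well_order_le_on] by simp
  then have "le_on ?Y <o le_on Z"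
    using ordLess_iff_ordIso_Restr[OF Well_order_le_on Well_order_le_on, of ?Y Z] assms(2)
    by (auto simp: Field_le_on)
  moreover assume "ord_type ?Y = ord_type Z"
  then have "le_on ?Y =o le_on {..<ord_type Z}" using Y by simp
  then have "le_on ?Y =o le_on Z"
    using ordIso_transitive ordIso_symmetric ord_type[OF assms(1)] by blast
  ultimately show False using not_ordLess_ordIso by blast
qed

subsection \<open>Cofinality\<close>

lemma cf_witness_less: "cf_witness \<alpha> B \<Longrightarrow> \<beta> \<in> B \<Longrightarrow> \<beta> < \<alpha>"
  unfolding cf_witness_def cofinal_in_def by blast

lemma cf_witness_cofinal: "cf_witness \<alpha> B \<Longrightarrow> \<gamma> < \<alpha> \<Longrightarrow> \<exists>\<beta>\<in>B. \<gamma> \<le> \<beta>"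
  unfolding cf_witness_def cofinal_in_def by blast

context
  fixes m h :: "'k::wellorder" and col :: "'k \<Rightarrow> 'k"
  assumes limit: "is_limit m"
    and col_less: "\<And>\<xi>. \<xi> < h \<Longrightarrow> col \<xi> < m"
    and bounded: "\<And>\<beta>. \<beta> < m \<Longrightarrow> \<not> cofinal_in {\<xi>. \<xi> < h \<and> col \<xi> < \<beta>} h"
begin

lemma cf_witness_cover:
  assumes "cf_witness m B" and "\<eta> < m"
  shows "\<exists>\<beta>\<in>B. \<eta> < \<beta>"
proof -
  obtain \<gamma> where "\<eta> < \<gamma>" "\<gamma> < m" using limit assms(2) unfolding is_limit_def by blast
  moreover obtain \<beta> where "\<beta> \<in> B" "\<gamma> \<le> \<beta>"
    using cf_witness_cofinal[OF assms(1) \<open>\<gamma> < m\<close>] by blast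
  ultimately show ?thesis using order_less_le_trans by blast
qed

text \<open>Mapping each point of a cofinal subset of \<open>h\<close> to a bound in \<open>B\<close> for its colour yields a
cofinal subset of \<open>m\<close>, since no colour class below a fixed bound is cofinal in \<open>h\<close>.\<close>

lemma cf_witness_le_cofinal_colour:
  assumes B: "cf_witness m B" and A: "cofinal_in A h"
  shows "|B| \<le>o |A|"
proof -
  define sel where "sel a = (SOME \<beta>. \<beta> \<in> B \<and> col a < \<beta>)" for a
  have sel: "sel a \<in> B \<and> col a < sel a" if "a \<in> A" for a
  proof -
    have "a < h" using A that unfolding cofinal_in_def by blast
    then have "\<exists>\<beta>. \<beta> \<in> B \<and> col a < \<beta>" using cf_witness_cover[OF B col_less] by blast
    then show ?thesis unfolding sel_def by (rule someI_ex)
  qed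
  have "cofinal_in (sel ` A) m"
    unfolding cofinal_in_def
  proof (intro conjI allI impI)
    show "sel ` A \<subseteq> {..<m}" using sel cf_witness_less[OF B] by blast
    fix \<eta> assume "\<eta> < m"
    show "\<exists>a\<in>sel ` A. \<eta> \<le> a"
    proof (rule ccontr)
      assume "\<not> ?thesis"
      then have small: "sel a < \<eta>" if "a \<in> A" for a using that by (simp add: not_le)
      obtain \<beta> where \<beta>: "\<beta> \<in> B" "\<eta> \<le> \<beta>" using cf_witness_cofinal[OF B \<open>\<eta> < m\<close>] by blast
      have "col a < \<beta>" if "a \<in> A" for a
        using sel[OF that] small[OF that] \<beta>(2) by (meson less_trans less_le_trans)
      then have "A \<subseteq> {\<xi>. \<xi> < h \<and> col \<xi> < \<beta>}" using A unfolding cofinal_in_def by blast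
      then have "cofinal_in {\<xi>. \<xi> < h \<and> col \<xi> < \<beta>} h" using A unfolding cofinal_in_def by blast
      then show False using bounded cf_witness_less[OF B \<beta>(1)] by blast
    qed
  qed
  then have "|B| \<le>o |sel ` A|" using B unfolding cf_witness_def card_le_def by blast
  then show ?thesis using card_of_image ordLeq_transitive by blast
qed

lemma same_cf_of_bounded_colour_classes: "same_cf h m \<and> is_limit h"
proof -
  obtain B where B: "cf_witness m B" using cf_witness_exists by blast
  have "\<exists>\<rho>. \<rho> < h \<and> (\<forall>\<xi>. \<xi> < h \<and> col \<xi> < \<beta> \<longrightarrow> \<xi> < \<rho>)" if "\<beta> \<in> B" for \<beta>
  proof -
    have "\<not> cofinal_in {\<xi>. \<xi> < h \<and> col \<xi> < \<beta>} h" using bounded cf_witness_less[OF B that] .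
    then show ?thesis unfolding cofinal_in_def by (auto simp: not_le)
  qed
  then obtain \<rho> where \<rho>: "\<And>\<beta>. \<beta> \<in> B \<Longrightarrow> \<rho> \<beta> < h \<and> (\<forall>\<xi>. \<xi> < h \<and> col \<xi> < \<beta> \<longrightarrow> \<xi> < \<rho> \<beta>)"
    by metis
  have below_\<rho>: "\<exists>\<beta>\<in>B. \<xi> < \<rho> \<beta>" if "\<xi> < h" for \<xi>
    using cf_witness_cover[OF B col_less[OF that]] \<rho> that by blast
  have cofinal: "cofinal_in (\<rho> ` B) h"
    unfolding cofinal_in_def using \<rho> below_\<rho> by (force simp: less_imp_le)
  have le: "|\<rho> ` B| \<le>o |B|" by (rule card_of_image)
  have "cf_witness h (\<rho> ` B)"
    unfolding cf_witness_def card_le_def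
    using cofinal le cf_witness_le_cofinal_colour[OF B] ordLeq_transitive by blast
  moreover have "card_eq (\<rho> ` B) B"
    unfolding card_eq_def using le cf_witness_le_cofinal_colour[OF B cofinal] ordIso_iff_ordLeq by blast
  ultimately have "same_cf h m" using B unfolding same_cf_def by blast
  moreover have "is_limit h" unfolding is_limit_def using below_\<rho> \<rho> by blast
  ultimately show ?thesis by blast
qed

end

subsection \<open>Clubs\<close>

definition next_in :: "'k::wellorder set \<Rightarrow> 'k \<Rightarrow> 'k" where
  "next_in D \<alpha> = (LEAST \<delta>. \<delta> \<in> D \<and> \<alpha> \<le> \<delta>)"

definition sup_below :: "'k::wellorder set \<Rightarrow> 'k \<Rightarrow> 'k" where
  "sup_below D \<alpha> = (LEAST \<sigma>. \<forall>\<delta>\<in>D. \<delta> < \<alpha> \<longrightarrow> \<delta> \<le> \<sigma>)"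

lemma next_in: "club D \<Longrightarrow> next_in D \<alpha> \<in> D \<and> \<alpha> \<le> next_in D \<alpha>"
  unfolding next_in_def club_def by (rule LeastI_ex) blast

lemma next_in_le: "\<delta> \<in> D \<Longrightarrow> \<alpha> \<le> \<delta> \<Longrightarrow> next_in D \<alpha> \<le> \<delta>"
  unfolding next_in_def by (rule Least_le) simp

lemma next_in_eq:
  assumes "club D" and "\<alpha> \<le> \<beta>" and "\<not> (\<exists>\<delta>\<in>D. \<alpha> \<le> \<delta> \<and> \<delta> < \<beta>)"
  shows "next_in D \<alpha> = next_in D \<beta>"
proof (rule order.antisym)
  show "next_in D \<alpha> \<le> next_in D \<beta>"
    using next_in[OF assms(1), of \<beta>] assms(2) by (auto intro: next_in_le)
  show "next_in D \<beta> \<le> next_in D \<alpha>"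
    using next_in[OF assms(1), of \<alpha>] assms(3) by (auto simp: not_less intro: next_in_le)
qed

lemma le_sup_below:
  assumes "\<delta> \<in> D" and "\<delta> < \<alpha>" shows "\<delta> \<le> sup_below D \<alpha>"
proof -
  have "\<forall>\<delta>\<in>D. \<delta> < \<alpha> \<longrightarrow> \<delta> \<le> sup_below D \<alpha>"
    unfolding sup_below_def by (rule LeastI[of _ \<alpha>]) (simp add: less_imp_le)
  then show ?thesis using assms by blast
qed

lemma sup_below_less:
  assumes "club D" and "\<alpha> \<notin> D" and "\<exists>\<delta>\<in>D. \<delta> < \<alpha>"
  shows "sup_below D \<alpha> < \<alpha>"
proof -
  have "sup_below D \<alpha> \<le> \<alpha>" unfolding sup_below_def by (rule Least_le) auto
  moreover have "sup_below D \<alpha> \<noteq> \<alpha>"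
  proof
    assume "sup_below D \<alpha> = \<alpha>"
    then have "\<forall>\<beta><\<alpha>. \<exists>\<delta>\<in>D. \<beta> < \<delta> \<and> \<delta> < \<alpha>"
      using not_less_Least[where P = "\<lambda>\<sigma>. \<forall>\<delta>\<in>D. \<delta> < \<alpha> \<longrightarrow> \<delta> \<le> \<sigma>"]
      unfolding sup_below_def by (fastforce simp: not_le)
    then show False using assms unfolding club_def by blast
  qed
  ultimately show ?thesis by simp
qed

subsection \<open>Streamlined trees\<close>

definition height :: "('k::wellorder \<rightharpoonup> 'v) \<Rightarrow> 'k" where
  "height t = (LEAST \<alpha>. dom t = {..<\<alpha>})"

lemma height_eq: "dom t = {..<\<alpha>} \<Longrightarrow> height t = \<alpha>"
  unfolding height_def
  by (rule Least_equality) simp_all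

context
  fixes m :: "'k::wellorder" and T :: "('k \<rightharpoonup> 'v) set"
  assumes tree: "streamlined_tree m T"
begin

lemma dom_eq_height: "t \<in> T \<Longrightarrow> dom t = {..<height t}"
  using tree unfolding streamlined_tree_def by (metis height_eq)

lemma restrict_mem: "t \<in> T \<Longrightarrow> t |` {..<\<alpha>} \<in> T"
  using tree unfolding streamlined_tree_def by blast

lemma height_restrict: "t \<in> T \<Longrightarrow> \<alpha> \<le> height t \<Longrightarrow> height (t |` {..<\<alpha>}) = \<alpha>"
  by (rule height_eq) (auto simp: dom_eq_height)

lemma restrict_height: "t \<in> T \<Longrightarrow> t |` {..<height t} = t"
proof
  fix \<xi> assume "t \<in> T"
  then have "\<xi> \<notin> dom t" if "\<not> \<xi> < height t" using that dom_eq_height by simp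
  then show "(t |` {..<height t}) \<xi> = t \<xi>" by (cases "\<xi> < height t") (simp_all add: domIff)
qed

lemma mem_level_iff: "t \<in> level T \<alpha> \<longleftrightarrow> t \<in> T \<and> height t = \<alpha>"
  unfolding level_def using dom_eq_height height_eq by auto

lemma empty_mem: "Map.empty \<in> T"
proof -
  obtain t where t: "t \<in> T" using tree unfolding streamlined_tree_def level_def by blast
  have "{..<(LEAST \<alpha>::'k. True)} = {}" using not_less_Least by blast
  then show ?thesis using restrict_mem[OF t, of "LEAST \<alpha>. True"] by simp
qed

lemma strict_map_leD:
  assumes "x \<in> T" "y \<in> T" "strict_map_le x y"
  shows "height x < height y \<and> x = y |` {..<height x}"
proof -
  have le: "x \<subseteq>\<^sub>m y" and "x \<noteq> y" using assms(3) by (auto simp: strict_map_le_def)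
  have eq: "x = y |` {..<height x}"
  proof
    fix \<xi>
    show "x \<xi> = (y |` {..<height x}) \<xi>"
      using le dom_eq_height[OF assms(1)] unfolding map_le_def
      by (cases "\<xi> < height x") (auto simp: domIff)
  qed
  have "height x \<le> height y"
    using map_le_implies_dom_le[OF le] dom_eq_height assms(1,2) by simp
  moreover have "height x \<noteq> height y"
    using eq \<open>x \<noteq> y\<close> restrict_height[OF assms(2)] by auto
  ultimately show ?thesis using eq by simp
qed

lemma strict_map_le_restrict:
  assumes "y \<in> T" "\<alpha> < \<beta>" "\<beta> \<le> height y"
  shows "strict_map_le (y |` {..<\<alpha>}) (y |` {..<\<beta>})"
proof -
  have "y |` {..<\<alpha>} \<subseteq>\<^sub>m y |` {..<\<beta>}"
    using assms(2) by (auto simp: map_le_def)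
  moreover have "height (y |` {..<\<alpha>}) \<noteq> height (y |` {..<\<beta>})"
    using height_restrict[OF assms(1)] assms(2,3) by simp
  ultimately show ?thesis unfolding strict_map_le_def by auto
qed

end

lemma special_if_chain_injective_colouring:
  fixes m :: "'k::wellorder" and T :: "('k \<rightharpoonup> 'v) set" and c :: "('k \<rightharpoonup> 'v) \<Rightarrow> 'k"
  assumes "Map.empty \<in> T"
    and "\<And>x. x \<in> T \<Longrightarrow> c x < m"
    and "\<And>x y. x \<in> T \<Longrightarrow> y \<in> T \<Longrightarrow> strict_map_le x y \<Longrightarrow> c x \<noteq> c y"
  shows "special m T"
proof -
  define \<A> where "\<A> = (\<lambda>\<eta>. {x \<in> T. c x = \<eta>}) ` {..<m}"
  have "antichain_in T {x \<in> T. c x = \<eta>}" for \<eta>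
    using assms(3) unfolding antichain_in_def by blast
  then have "\<forall>A\<in>\<A>. antichain_in T A" unfolding \<A>_def by blast
  moreover have "card_le \<A> {..<m}" unfolding card_le_def \<A>_def by (rule card_of_image)
  moreover have "x \<in> \<Union>\<A>" if "x \<in> T" for x
    using that assms(2)[OF that] unfolding \<A>_def by blast
  ultimately have antichains: "\<exists>\<A>. card_le \<A> {..<m} \<and> (\<forall>A\<in>\<A>. antichain_in T A) \<and>
      {x \<in> T. Map.empty = z} \<subseteq> \<Union>\<A>" for z :: "'k \<rightharpoonup> 'v"
    by (intro exI[of _ \<A>]) blast
  have "strict_map_le Map.empty x" if "strict_map_le y x" for x y :: "'k \<rightharpoonup> 'v"
    using that map_le_antisym[of y Map.empty] unfolding strict_map_le_def by auto
  then show ?thesis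
    unfolding special_def using assms(1) antichains by (intro exI[of _ "\<lambda>_. Map.empty"]) blast
qed

subsection \<open>The colouring\<close>

locale regressive_selection =
  fixes m :: "'k::wellorder" and T :: "('k \<rightharpoonup> 'v) set" and D :: "'k set"
    and b :: "'k \<Rightarrow> ('k \<rightharpoonup> 'v)" and d :: "('k \<rightharpoonup> 'v) \<Rightarrow> 'k"
  assumes successor: "is_successor_of TYPE('k) m"
    and tree: "streamlined_tree m T"
    and coherent: "coherent (E_cf m) T"
    and club_D: "club D"
    and selection: "\<And>\<delta>. \<delta> \<in> D \<inter> E_cf m \<Longrightarrow> b \<delta> \<in> level T \<delta> \<and> d (b \<delta>) < \<delta>"
    and chain_injective: "\<And>\<gamma> \<delta>. \<gamma> \<in> D \<inter> E_cf m \<Longrightarrow> \<delta> \<in> D \<inter> E_cf m \<Longrightarrow>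
           strict_map_le (b \<gamma>) (b \<delta>) \<Longrightarrow> d (b \<gamma>) \<noteq> d (b \<delta>)"
begin

text \<open>A dummy value below \<open>m\<close>, used for unused components of a code and for the colours of
segments beyond the height of a node.\<close>

definition filler :: 'k where
  "filler = (SOME \<alpha>. \<alpha> < m)"

definition enc :: "nat \<times> 'k \<times> 'k \<times> 'k \<Rightarrow> 'k" where
  "enc = (SOME f. inj_on f (UNIV \<times> {..<m} \<times> {..<m} \<times> {..<m}) \<and> range f \<subseteq> {..<m})"

definition emb :: "'k \<Rightarrow> 'k \<Rightarrow> 'k" where
  "emb \<gamma> = (SOME f. inj_on f {..<\<gamma>} \<and> range f \<subseteq> {..<m})"

definition idx :: "'k \<Rightarrow> ('k \<rightharpoonup> 'v) \<Rightarrow> 'k" where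
  "idx \<gamma> = (SOME f. inj_on f (level T \<gamma>) \<and> range f \<subseteq> {..<m})"

lemma filler_less: "filler < m"
  unfolding filler_def using successor_nonempty[OF successor] by (rule someI_ex)

lemma enc: "inj_on enc (UNIV \<times> {..<m} \<times> {..<m} \<times> {..<m}) \<and> range enc \<subseteq> {..<m}"
  unfolding enc_def using card_code_domain[OF successor] filler_less
  by (intro someI_ex[OF inj_on_into_nonempty]) auto

lemma emb: "inj_on (emb \<gamma>) {..<\<gamma>} \<and> range (emb \<gamma>) \<subseteq> {..<m}"
  unfolding emb_def using card_lessThan_le_successor[OF successor] filler_less
  by (intro someI_ex[OF inj_on_into_nonempty]) auto

lemma idx: "inj_on (idx \<gamma>) (level T \<gamma>) \<and> range (idx \<gamma>) \<subseteq> {..<m}"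
  unfolding idx_def using tree filler_less unfolding streamlined_tree_def card_le_def
  by (intro someI_ex[OF inj_on_into_nonempty]) auto

lemma emb_less: "emb \<gamma> \<alpha> < m"
  using emb by blast

lemma idx_less: "idx \<gamma> t < m"
  using idx by blast

definition colour_class :: "('k \<Rightarrow> 'k) \<Rightarrow> 'k \<Rightarrow> 'k \<Rightarrow> 'k set" where
  "colour_class col h \<beta> = {\<xi>. \<xi> < h \<and> col \<xi> < \<beta>}"

definition least_cofinal_class :: "('k \<Rightarrow> 'k) \<Rightarrow> 'k \<Rightarrow> 'k" where
  "least_cofinal_class col h = (LEAST \<beta>. \<beta> < m \<and> cofinal_in (colour_class col h \<beta>) h)"

definition agree_point :: "('k \<rightharpoonup> 'v) \<Rightarrow> 'k" where
  "agree_point x = (LEAST \<gamma>. d (b (height x)) < \<gamma> \<and>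
     (\<forall>\<xi>. \<gamma> \<le> \<xi> \<and> \<xi> < height x \<longrightarrow> x \<xi> = b (height x) \<xi>))"

definition code :: "('k \<Rightarrow> 'k) \<Rightarrow> ('k \<rightharpoonup> 'v) \<Rightarrow> nat \<times> 'k \<times> 'k \<times> 'k" where
  "code col x =
    (let h = height x in
     if h \<notin> D then
       if \<exists>\<delta>\<in>D. \<delta> < h then (0, col (sup_below D h), emb (next_in D h) h, filler)
       else (1, filler, emb (next_in D h) h, filler)
     else if \<exists>\<beta><m. cofinal_in (colour_class col h \<beta>) h then
       (let \<beta> = least_cofinal_class col h in (2, \<beta>, ord_type (colour_class col h \<beta>), filler))
     else
       (let \<gamma> = agree_point x in (3, col \<gamma>, emb \<gamma> (d (b h)), idx \<gamma> (b h |` {..<\<gamma>}))))"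

definition colour :: "('k \<rightharpoonup> 'v) \<Rightarrow> 'k" where
  "colour = wfrec (inv_image {(\<alpha>, \<beta>). \<alpha> < \<beta>} height)
     (\<lambda>c x. enc (code (\<lambda>\<xi>. if \<xi> < height x then c (x |` {..<\<xi>}) else filler) x))"

definition path_colour :: "('k \<rightharpoonup> 'v) \<Rightarrow> 'k \<Rightarrow> 'k" where
  "path_colour x \<xi> = (if \<xi> < height x then colour (x |` {..<\<xi>}) else filler)"

abbreviation colour_injective_below :: "('k \<rightharpoonup> 'v) \<Rightarrow> bool" where
  "colour_injective_below y \<equiv> inj_on (\<lambda>\<xi>. colour (y |` {..<\<xi>})) {..<height y}"

lemma wf_height_order: "wf (inv_image {(\<alpha>, \<beta>). \<alpha> < \<beta>} (height :: ('k \<rightharpoonup> 'v) \<Rightarrow> 'k))"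
  by (rule wf_inv_image[OF wf])

lemma colour_less: "colour x < m"
  using enc unfolding colour_def by (subst wfrec[OF wf_height_order]) auto

lemma path_colour_less: "path_colour x \<xi> < m"
  by (simp add: path_colour_def colour_less filler_less)

lemma colour_eq:
  assumes "x \<in> T" shows "colour x = enc (code (path_colour x) x)"
proof -
  let ?R = "inv_image {(\<alpha>, \<beta>). \<alpha> < \<beta>} (height :: ('k \<rightharpoonup> 'v) \<Rightarrow> 'k)"
  have "colour x = enc (code (\<lambda>\<xi>. if \<xi> < height x then cut colour ?R x (x |` {..<\<xi>}) else filler) x)"
    unfolding colour_def by (subst wfrec[OF wf_height_order]) simp
  also have "(\<lambda>\<xi>. if \<xi> < height x then cut colour ?R x (x |` {..<\<xi>}) else filler) = path_colour x"
  proof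
    fix \<xi>
    have "height (x |` {..<\<xi>}) = \<xi>" if "\<xi> < height x"
      using height_restrict[OF tree assms] that by simp
    then show "(if \<xi> < height x then cut colour ?R x (x |` {..<\<xi>}) else filler) = path_colour x \<xi>"
      by (simp add: path_colour_def cut_apply)
  qed
  finally show ?thesis .
qed

lemma selected_branch:
  assumes "\<delta> \<in> D \<inter> E_cf m"
  shows "b \<delta> \<in> T \<and> height (b \<delta>) = \<delta> \<and> d (b \<delta>) < \<delta>"
  using selection[OF assms] mem_level_iff[OF tree] by blast

lemma selected_branch_restrict:
  assumes "\<delta> \<in> D \<inter> E_cf m" and "\<gamma> \<le> \<delta>"
  shows "b \<delta> |` {..<\<gamma>} \<in> level T \<gamma>"
  using selected_branch[OF assms(1)] restrict_mem[OF tree] height_restrict[OF tree] assms(2)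
  unfolding mem_level_iff[OF tree] by simp

lemma agree_point:
  assumes "z \<in> T" and "height z \<in> D \<inter> E_cf m" and "is_limit (height z)"
  shows "d (b (height z)) < agree_point z \<and> agree_point z < height z \<and>
    (\<forall>\<xi>. agree_point z \<le> \<xi> \<and> \<xi> < height z \<longrightarrow> z \<xi> = b (height z) \<xi>)"
proof -
  let ?h = "height z"
  let ?P = "\<lambda>\<gamma>. d (b ?h) < \<gamma> \<and> (\<forall>\<xi>. \<gamma> \<le> \<xi> \<and> \<xi> < ?h \<longrightarrow> z \<xi> = b ?h \<xi>)"
  have "b ?h \<in> level T ?h" and "z \<in> level T ?h"
    using selection[OF assms(2)] assms(1) mem_level_iff[OF tree] by auto
  then obtain \<beta> where "\<beta> < ?h" and \<beta>: "\<forall>\<xi><?h. z \<xi> \<noteq> b ?h \<xi> \<longrightarrow> \<xi> \<le> \<beta>"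
    using coherent assms(2) unfolding coherent_def by blast
  moreover have "d (b ?h) < ?h" using selection[OF assms(2)] by blast
  ultimately obtain \<gamma> where \<gamma>: "max \<beta> (d (b ?h)) < \<gamma>" "\<gamma> < ?h"
    using assms(3) unfolding is_limit_def by (metis max_less_iff_conj)
  then have "\<beta> < \<gamma>" and "d (b ?h) < \<gamma>" by auto
  moreover have "z \<xi> = b ?h \<xi>" if "\<gamma> \<le> \<xi>" "\<xi> < ?h" for \<xi>
    using \<beta> that \<open>\<beta> < \<gamma>\<close> by (meson le_less_trans not_le)
  ultimately have "?P \<gamma>" by blast
  then have "?P (agree_point z)" and "agree_point z \<le> \<gamma>"
    unfolding agree_point_def by (rule LeastI, rule Least_le)
  then show ?thesis using \<gamma>(2) by simp
qed

lemma colour_class_card_less: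
  assumes "colour_injective_below z" and "\<beta> < m"
  shows "|colour_class (path_colour z) (height z) \<beta>| <o |{..<m}|"
proof -
  let ?C = "colour_class (path_colour z) (height z) \<beta>"
  have "?C \<subseteq> {..<height z}" by (auto simp: colour_class_def)
  then have "inj_on (\<lambda>\<xi>. colour (z |` {..<\<xi>})) ?C" using assms(1) inj_on_subset by blast
  moreover have "(\<lambda>\<xi>. colour (z |` {..<\<xi>})) ` ?C \<subseteq> {..<\<beta>}"
    by (auto simp: colour_class_def path_colour_def)
  ultimately have "|?C| \<le>o |{..<\<beta>}|" using card_of_ordLeq by blast
  then show ?thesis
    using card_lessThan_less_successor[OF successor assms(2)] ordLeq_ordLess_trans by blast
qed

lemma least_cofinal_class:
  assumes "\<exists>\<beta><m. cofinal_in (colour_class col h \<beta>) h"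
  shows "least_cofinal_class col h < m \<and> cofinal_in (colour_class col h (least_cofinal_class col h)) h"
  using assms unfolding least_cofinal_class_def by (metis (mono_tags, lifting) LeastI_ex)

lemma E_cf_if_no_cofinal_class:
  assumes "\<not> (\<exists>\<beta><m. cofinal_in (colour_class (path_colour z) (height z) \<beta>) (height z))"
  shows "height z \<in> E_cf m \<and> is_limit (height z)"
proof -
  have "same_cf (height z) m \<and> is_limit (height z)"
    by (rule same_cf_of_bounded_colour_classes[OF successor_limit[OF successor]])
      (use path_colour_less assms in \<open>auto simp: colour_class_def\<close>)
  then show ?thesis unfolding E_cf_def by blast
qed

lemma code_in_domain:
  assumes "z \<in> T" and "colour_injective_below z"
  shows "code (path_colour z) z \<in> UNIV \<times> {..<m} \<times> {..<m} \<times> {..<m}"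
proof -
  let ?h = "height z" and ?col = "path_colour z"
  have "least_cofinal_class ?col ?h < m" and "ord_type (colour_class ?col ?h (least_cofinal_class ?col ?h)) < m"
    if "\<exists>\<beta><m. cofinal_in (colour_class ?col ?h \<beta>) ?h"
    using ord_type colour_class_card_less[OF assms(2)] least_cofinal_class[OF that] by blast+
  then show ?thesis
    unfolding code_def Let_def by (simp add: path_colour_less emb_less idx_less filler_less)
qed

lemma code_tag_gap: "fst (code col x) \<le> 1 \<longleftrightarrow> height x \<notin> D"
  by (simp add: code_def Let_def)

lemma code_tag_cofinal:
  "height x \<in> D \<Longrightarrow> fst (code col x) = 2 \<longleftrightarrow>
    (\<exists>\<beta><m. cofinal_in (colour_class col (height x) \<beta>) (height x))"
  by (simp add: code_def Let_def)

context
  fixes x y :: "'k \<rightharpoonup> 'v"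
  assumes x: "x \<in> T" and y: "y \<in> T" and below: "strict_map_le x y"
    and injective: "colour_injective_below y"
begin

lemma lower_height_less: "height x < height y"
  using strict_map_leD[OF tree x y below] by blast

lemma lower_eq_restrict: "x = y |` {..<height x}"
  using strict_map_leD[OF tree x y below] by blast

lemma lower_restrict_eq:
  assumes "\<xi> \<le> height x" shows "x |` {..<\<xi>} = y |` {..<\<xi>}"
proof -
  have "{..<height x} \<inter> {..<\<xi>} = {..<\<xi>}" using assms by auto
  then show ?thesis by (subst lower_eq_restrict) simp
qed

lemma lower_apply_eq: "\<xi> < height x \<Longrightarrow> x \<xi> = y \<xi>"
  by (subst lower_eq_restrict) simp

lemma lower_path_colour_eq:
  assumes "\<xi> < height x" shows "path_colour x \<xi> = path_colour y \<xi>"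
  using assms less_trans[OF assms lower_height_less] lower_restrict_eq[OF less_imp_le[OF assms]]
  by (simp add: path_colour_def)

lemma upper_path_colour_inj:
  "\<xi> < height y \<Longrightarrow> \<xi>' < height y \<Longrightarrow> path_colour y \<xi> = path_colour y \<xi>' \<Longrightarrow> \<xi> = \<xi>'"
  using injective by (simp add: path_colour_def inj_on_def)

lemma lower_colour_injective: "colour_injective_below x"
proof -
  have "inj_on (\<lambda>\<xi>. colour (y |` {..<\<xi>})) {..<height x}"
    using inj_on_subset[OF injective] lower_height_less by auto
  then show ?thesis using lower_restrict_eq by (simp add: inj_on_def)
qed

lemma gap_codes_differ:
  assumes "height x \<notin> D" and "height y \<notin> D"
  shows "code (path_colour x) x \<noteq> code (path_colour y) y"
proof
  assume eq: "code (path_colour x) x = code (path_colour y) y"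
  let ?hx = "height x" and ?hy = "height y"
  have no_D_between: "\<not> (\<exists>\<delta>\<in>D. ?hx \<le> \<delta> \<and> \<delta> < ?hy)"
  proof (cases "\<exists>\<delta>\<in>D. \<delta> < ?hx")
    case True
    then have "\<exists>\<delta>\<in>D. \<delta> < ?hy" using lower_height_less less_trans by blast
    with True eq have "path_colour x (sup_below D ?hx) = path_colour y (sup_below D ?hy)"
      using assms by (simp add: code_def Let_def)
    moreover have "sup_below D ?hx < ?hx" and "sup_below D ?hy < ?hy"
      using sup_below_less[OF club_D] assms True \<open>\<exists>\<delta>\<in>D. \<delta> < ?hy\<close> by blast+
    ultimately have "sup_below D ?hx = sup_below D ?hy"
      using lower_path_colour_eq upper_path_colour_inj lower_height_less by (metis less_trans)
    then show ?thesis
      using le_sup_below \<open>sup_below D ?hx < ?hx\<close> by (metis leD order.strict_trans2)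
  next
    case False
    then have "\<not> (\<exists>\<delta>\<in>D. \<delta> < ?hy)" using eq assms by (auto simp: code_def Let_def split: if_splits)
    then show ?thesis by blast
  qed
  have "emb (next_in D ?hx) ?hx = emb (next_in D ?hy) ?hy"
    using eq assms by (auto simp: code_def Let_def split: if_splits)
  moreover have "next_in D ?hx = next_in D ?hy"
    using next_in_eq[OF club_D less_imp_le[OF lower_height_less] no_D_between] .
  moreover have "?hx < next_in D ?hx" and "?hy < next_in D ?hy"
    using next_in[OF club_D] assms by (metis le_less)+
  ultimately have "?hx = ?hy" using emb unfolding inj_on_def by auto
  then show False using lower_height_less by simp
qed

lemma cofinal_class_codes_differ:
  assumes "\<exists>\<beta><m. cofinal_in (colour_class (path_colour x) (height x) \<beta>) (height x)"
    and "\<exists>\<beta><m. cofinal_in (colour_class (path_colour y) (height y) \<beta>) (height y)"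
    and "height x \<in> D" and "height y \<in> D"
  shows "code (path_colour x) x \<noteq> code (path_colour y) y"
proof
  assume eq: "code (path_colour x) x = code (path_colour y) y"
  let ?hx = "height x" and ?hy = "height y"
  define \<beta> where "\<beta> = least_cofinal_class (path_colour y) ?hy"
  define Y where "Y = colour_class (path_colour y) ?hy \<beta>"
  have "least_cofinal_class (path_colour x) ?hx = \<beta>"
    and "ord_type (colour_class (path_colour x) ?hx (least_cofinal_class (path_colour x) ?hx)) = ord_type Y"
    using eq assms unfolding code_def Let_def \<beta>_def Y_def by auto
  then have ord_eq: "ord_type (colour_class (path_colour x) ?hx \<beta>) = ord_type Y" by simp
  have "\<beta> < m" and "cofinal_in Y ?hy"
    using least_cofinal_class[OF assms(2)] unfolding \<beta>_def Y_def by blast+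
  then have "\<exists>z. z \<in> Y \<and> ?hx \<le> z" using lower_height_less unfolding cofinal_in_def by blast
  define z where "z = (LEAST \<xi>. \<xi> \<in> Y \<and> ?hx \<le> \<xi>)"
  have z: "z \<in> Y" "?hx \<le> z"
    using LeastI_ex[OF \<open>\<exists>z. z \<in> Y \<and> ?hx \<le> z\<close>] unfolding z_def by blast+
  have least: "z \<le> \<xi>" if "\<xi> \<in> Y" "?hx \<le> \<xi>" for \<xi>
    unfolding z_def using that by (simp add: Least_le)
  have "colour_class (path_colour x) ?hx \<beta> = {\<xi> \<in> Y. \<xi> < z}"
  proof (intro set_eqI iffI)
    fix \<xi> assume "\<xi> \<in> colour_class (path_colour x) ?hx \<beta>"
    then have "\<xi> < ?hx" "path_colour x \<xi> < \<beta>" by (simp_all add: colour_class_def)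
    then show "\<xi> \<in> {\<xi> \<in> Y. \<xi> < z}"
      using lower_path_colour_eq less_trans[OF _ lower_height_less] order.strict_trans2[OF _ z(2)]
      by (simp add: Y_def colour_class_def)
  next
    fix \<xi> assume "\<xi> \<in> {\<xi> \<in> Y. \<xi> < z}"
    then have "\<xi> \<in> Y" "\<xi> < z" by simp_all
    then have "\<xi> < ?hx" using least[of \<xi>] by (meson not_less leD)
    then show "\<xi> \<in> colour_class (path_colour x) ?hx \<beta>"
      using \<open>\<xi> \<in> Y\<close> lower_path_colour_eq by (simp add: colour_class_def Y_def)
  qed
  moreover have "ord_type {\<xi> \<in> Y. \<xi> < z} \<noteq> ord_type Y"
    using ord_type_initial_segment[OF colour_class_card_less[OF injective \<open>\<beta> < m\<close>]] z(1)
    unfolding Y_def by blast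
  ultimately show False using ord_eq by simp
qed

lemma selected_branches_extend:
  assumes Ex: "height x \<in> D \<inter> E_cf m" and Ey: "height y \<in> D \<inter> E_cf m"
    and below_\<gamma>: "b (height x) |` {..<\<gamma>} = b (height y) |` {..<\<gamma>}"
    and agree_x: "\<And>\<xi>. \<gamma> \<le> \<xi> \<Longrightarrow> \<xi> < height x \<Longrightarrow> x \<xi> = b (height x) \<xi>"
    and agree_y: "\<And>\<xi>. \<gamma> \<le> \<xi> \<Longrightarrow> \<xi> < height y \<Longrightarrow> y \<xi> = b (height y) \<xi>"
  shows "strict_map_le (b (height x)) (b (height y))"
proof -
  let ?hx = "height x" and ?hy = "height y"
  note bx = selected_branch[OF Ex] and by' = selected_branch[OF Ey]
  have "b ?hx \<xi> = b ?hy \<xi>" if "\<xi> < ?hx" for \<xi>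
  proof (cases "\<xi> < \<gamma>")
    case True
    then show ?thesis using fun_cong[OF below_\<gamma>, of \<xi>] by simp
  next
    case False
    then have "b ?hx \<xi> = x \<xi>" using agree_x that by (simp add: not_less)
    also have "\<dots> = y \<xi>" using lower_apply_eq[OF that] .
    also have "\<dots> = b ?hy \<xi>"
      using agree_y False less_trans[OF that lower_height_less] by (simp add: not_less)
    finally show ?thesis .
  qed
  then have "b ?hx \<subseteq>\<^sub>m b ?hy"
    using dom_eq_height[OF tree] bx unfolding map_le_def by auto
  moreover have "b ?hx \<noteq> b ?hy"
    using bx by' lower_height_less by (metis less_irrefl)
  ultimately show ?thesis unfolding strict_map_le_def ..
qed

lemma coherent_codes_differ:
  assumes "\<not> (\<exists>\<beta><m. cofinal_in (colour_class (path_colour x) (height x) \<beta>) (height x))"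
    and "\<not> (\<exists>\<beta><m. cofinal_in (colour_class (path_colour y) (height y) \<beta>) (height y))"
    and "height x \<in> D" and "height y \<in> D"
  shows "code (path_colour x) x \<noteq> code (path_colour y) y"
proof
  assume eq: "code (path_colour x) x = code (path_colour y) y"
  let ?hx = "height x" and ?hy = "height y"
  obtain Ex: "?hx \<in> D \<inter> E_cf m" and "is_limit ?hx"
    using E_cf_if_no_cofinal_class[OF assms(1)] assms(3) by blast
  then have ax: "d (b ?hx) < agree_point x" "agree_point x < ?hx"
    "\<And>\<xi>. agree_point x \<le> \<xi> \<Longrightarrow> \<xi> < ?hx \<Longrightarrow> x \<xi> = b ?hx \<xi>"
    using agree_point[OF x] by blast+
  obtain Ey: "?hy \<in> D \<inter> E_cf m" and "is_limit ?hy"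
    using E_cf_if_no_cofinal_class[OF assms(2)] assms(4) by blast
  then have ay: "d (b ?hy) < agree_point y" "agree_point y < ?hy"
    "\<And>\<xi>. agree_point y \<le> \<xi> \<Longrightarrow> \<xi> < ?hy \<Longrightarrow> y \<xi> = b ?hy \<xi>"
    using agree_point[OF y] by blast+
  have col_eq: "path_colour x (agree_point x) = path_colour y (agree_point y)"
    and emb_eq: "emb (agree_point x) (d (b ?hx)) = emb (agree_point y) (d (b ?hy))"
    and idx_eq: "idx (agree_point x) (b ?hx |` {..<agree_point x}) =
      idx (agree_point y) (b ?hy |` {..<agree_point y})"
    using eq assms unfolding code_def Let_def by simp_all
  define \<gamma> where "\<gamma> = agree_point x"
  have "\<gamma> < ?hy" unfolding \<gamma>_def using less_trans[OF ax(2) lower_height_less] .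
  moreover have "path_colour y \<gamma> = path_colour y (agree_point y)"
    using col_eq lower_path_colour_eq[OF ax(2)] unfolding \<gamma>_def by simp
  ultimately have \<gamma>y: "agree_point y = \<gamma>" using upper_path_colour_inj[OF _ ay(2)] by metis
  have "emb \<gamma> (d (b ?hx)) = emb \<gamma> (d (b ?hy))" using emb_eq \<gamma>y unfolding \<gamma>_def by simp
  then have d_eq: "d (b ?hx) = d (b ?hy)"
    by (rule inj_onD[OF emb[THEN conjunct1]]) (use ax(1) ay(1) \<gamma>y in \<open>simp_all add: \<gamma>_def\<close>)
  have "idx \<gamma> (b ?hx |` {..<\<gamma>}) = idx \<gamma> (b ?hy |` {..<\<gamma>})"
    using idx_eq \<gamma>y unfolding \<gamma>_def by simp
  moreover have "b ?hx |` {..<\<gamma>} \<in> level T \<gamma>" and "b ?hy |` {..<\<gamma>} \<in> level T \<gamma>"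
    using selected_branch_restrict Ex Ey ax(2) \<open>\<gamma> < ?hy\<close> unfolding \<gamma>_def by (blast intro: less_imp_le)+
  ultimately have "b ?hx |` {..<\<gamma>} = b ?hy |` {..<\<gamma>}"
    by (rule inj_onD[OF idx[THEN conjunct1]])
  then have "strict_map_le (b ?hx) (b ?hy)"
    using selected_branches_extend[OF Ex Ey] ax(3) ay(3) unfolding \<gamma>_def[symmetric] \<gamma>y by blast
  then show False using chain_injective[OF Ex Ey] d_eq by simp
qed

lemma codes_differ: "code (path_colour x) x \<noteq> code (path_colour y) y"
proof -
  let ?cofinal = "\<lambda>z. \<exists>\<beta><m. cofinal_in (colour_class (path_colour z) (height z) \<beta>) (height z)"
  have tags_differ: "code (path_colour x) x \<noteq> code (path_colour y) y"
    if "fst (code (path_colour x) x) \<noteq> fst (code (path_colour y) y)"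
    using that by auto
  show ?thesis
  proof (cases "height x \<in> D"; cases "height y \<in> D")
    assume D: "height x \<in> D" "height y \<in> D"
    show ?thesis
    proof (cases "?cofinal x"; cases "?cofinal y")
      assume "?cofinal x" "?cofinal y"
      then show ?thesis using D by (rule cofinal_class_codes_differ)
    next
      assume "\<not> ?cofinal x" "\<not> ?cofinal y"
      then show ?thesis using D by (rule coherent_codes_differ)
    next
      assume "?cofinal x" "\<not> ?cofinal y"
      then show ?thesis
        using code_tag_cofinal[OF D(1), of "path_colour x"] code_tag_cofinal[OF D(2), of "path_colour y"]
        by (intro tags_differ) simp
    next
      assume "\<not> ?cofinal x" "?cofinal y"
      then show ?thesis
        using code_tag_cofinal[OF D(1), of "path_colour x"] code_tag_cofinal[OF D(2), of "path_colour y"]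
        by (intro tags_differ) simp
    qed
  next
    assume "height x \<notin> D" "height y \<notin> D"
    then show ?thesis by (rule gap_codes_differ)
  next
    assume "height x \<in> D" "height y \<notin> D"
    then show ?thesis
      using code_tag_gap[of "path_colour x" x] code_tag_gap[of "path_colour y" y]
      by (intro tags_differ) linarith
  next
    assume "height x \<notin> D" "height y \<in> D"
    then show ?thesis
      using code_tag_gap[of "path_colour x" x] code_tag_gap[of "path_colour y" y]
      by (intro tags_differ) linarith
  qed
qed

end

lemma colour_chain_injective:
  "x \<in> T \<Longrightarrow> y \<in> T \<Longrightarrow> strict_map_le x y \<Longrightarrow> colour x \<noteq> colour y"
proof (induction "height y" arbitrary: x y rule: less_induct)
  case less
  have distinct: "colour (y |` {..<\<xi>}) \<noteq> colour (y |` {..<\<xi>'})" if "\<xi> < \<xi>'" "\<xi>' < height y" for \<xi> \<xi>'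
  proof (rule less.hyps)
    show "height (y |` {..<\<xi>'}) < height y"
      using height_restrict[OF tree less.prems(2) less_imp_le[OF that(2)]] that(2) by simp
    show "strict_map_le (y |` {..<\<xi>}) (y |` {..<\<xi>'})"
      using strict_map_le_restrict[OF tree less.prems(2) that(1) less_imp_le[OF that(2)]] .
  qed (use restrict_mem[OF tree less.prems(2)] in blast)+
  have inj_y: "colour_injective_below y"
  proof (rule inj_onI)
    fix \<xi> \<xi>' assume "\<xi> \<in> {..<height y}" "\<xi>' \<in> {..<height y}"
      and "colour (y |` {..<\<xi>}) = colour (y |` {..<\<xi>'})"
    then show "\<xi> = \<xi>'"
      by (cases \<xi> \<xi>' rule: linorder_cases) (use distinct[of \<xi> \<xi>'] distinct[of \<xi>' \<xi>] in auto)
  qed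
  then have inj_x: "colour_injective_below x" using lower_colour_injective less.prems by blast
  have "code (path_colour x) x \<noteq> code (path_colour y) y"
    using codes_differ less.prems inj_y by blast
  then have "enc (code (path_colour x) x) \<noteq> enc (code (path_colour y) y)"
    using inj_onD[OF enc[THEN conjunct1] _ code_in_domain code_in_domain] less.prems inj_x inj_y by blast
  then show ?case using colour_eq[OF less.prems(1)] colour_eq[OF less.prems(2)] by simp
qed

end

theorem lemma2p8:
  fixes m :: "'k::wellorder"
    and T :: "('k \<rightharpoonup> 'v) set"
    and D :: "'k set"
    and b :: "'k \<Rightarrow> ('k \<rightharpoonup> 'v)"
    and d :: "('k \<rightharpoonup> 'v) \<Rightarrow> 'k"
  assumes "is_successor_of TYPE('k) m"
    and "streamlined_tree m T"
    and "coherent (E_cf m) T"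
    and "club D"
    and "\<And>\<delta>. \<delta> \<in> D \<inter> E_cf m \<Longrightarrow> b \<delta> \<in> level T \<delta> \<and> d (b \<delta>) < \<delta>"
    and "\<And>\<gamma> \<delta>. \<gamma> \<in> D \<inter> E_cf m \<Longrightarrow> \<delta> \<in> D \<inter> E_cf m \<Longrightarrow>
           strict_map_le (b \<gamma>) (b \<delta>) \<Longrightarrow> d (b \<gamma>) \<noteq> d (b \<delta>)"
  shows "special m T"
proof -
  interpret regressive_selection m T D b d
    using assms by unfold_locales
  show ?thesis
    by (rule special_if_chain_injective_colouring[OF empty_mem[OF tree] colour_less colour_chain_injective])
qed

end
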